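(* Let $\mathcal{M}$ be a family of distributions on $\mathcal{W}$. For any measurable loss $\ell$ and any algorithm $\mathsf{A}$ run on $S'\sim(\mu')^{\otimes n}$ such that the marginal distribution of $\mathsf{A}(S')$ belongs to $\mathcal{M}$, \[ \mathrm{gen}(\mu,\mu',\mathsf{A})\ge\mathsf{D}_4\!\left(\frac{I(S';\mathsf{A}(S'))}{n},\mathcal{M}\right), \] where \[ \mathsf{D}_4(r,\mathcal{M})\triangleq\inf_{\nu\in\mathcal{M}}\ \inf_{\substack{P_{\hat W,Z'}\in U(\nu,\mu'):\\ I(\hat W;Z')\le r}}\mathbb{E}\big[L_\mu(\hat W)-\ell(\hat W,Z')\big], \] with $U(\nu,\mu')$ the set of couplings of $\nu$ (on $\mathcal{W}$) and $\mu'$ (on $\mathcal{Z}$).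
   Context: Setup: $\mathcal{Z},\mathcal{W}$ measurable spaces, $\ell:\mathcal{W}\times\mathcal{Z}\to[0,\infty)$ measurable loss, $\mu$ (test) and $\mu'$ (training) distributions on $\mathcal{Z}$, $S'=(Z'_1,\dots,Z'_n)$ i.i.d. $\sim\mu'$, $\mathsf{A}$ a Markov kernel from $\mathcal{Z}^n$ to $\mathcal{W}$, $W'=\mathsf{A}(S')$, $L_\mu(w)=\mathbb{E}_{Z\sim\mu}\ell(w,Z)$, $L_s(w)=\frac1n\sum_i\ell(w,z_i)$, $\mathrm{gen}(\mu,\mu',\mathsf{A})=\mathbb{E}[L_\mu(W')-L_{S'}(W')]$. All expectations assumed finite. *)

theory Defs
  imports "HOL-Probability.Probability"
begin

definition KL_div :: "'a measure \<Rightarrow> 'a measure \<Rightarrow> ereal" where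
  "KL_div P Q =
     (if sets P = sets Q \<and> absolutely_continuous Q P then
        (let f = (\<lambda>x. enn2real (RN_deriv Q P x)) in
           enn2ereal (\<integral>\<^sup>+ x. ennreal (f x * ln (f x)) \<partial>Q)
         - enn2ereal (\<integral>\<^sup>+ x. ennreal (- (f x * ln (f x))) \<partial>Q))
      else \<infinity>)"

definition mutual_inf :: "'a measure \<Rightarrow> 'b measure \<Rightarrow> ('a \<times> 'b) measure \<Rightarrow> ereal" where
  "mutual_inf A B P = KL_div P (distr P A fst \<Otimes>\<^sub>M distr P B snd)"

definition couplings :: "'w measure \<Rightarrow> 'z measure \<Rightarrow> 'w measure \<Rightarrow> 'z measure \<Rightarrow> ('w \<times> 'z) measure set" where
  "couplings MW MZ \<nu> \<mu>' =
     {P. prob_space P \<and> sets P = sets (MW \<Otimes>\<^sub>M MZ)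
         \<and> distr P MW fst = \<nu> \<and> distr P MZ snd = \<mu>'}"

definition pop_risk :: "'z measure \<Rightarrow> ('w \<Rightarrow> 'z \<Rightarrow> real) \<Rightarrow> 'w \<Rightarrow> ennreal" where
  "pop_risk \<mu> loss w = (\<integral>\<^sup>+ z. ennreal (loss w z) \<partial>\<mu>)"

definition emp_risk :: "nat \<Rightarrow> ('w \<Rightarrow> 'z \<Rightarrow> real) \<Rightarrow> (nat \<Rightarrow> 'z) \<Rightarrow> 'w \<Rightarrow> real" where
  "emp_risk n loss s w = (\<Sum>i<n. loss w (s i)) / real n"

definition joint_law :: "'z measure \<Rightarrow> 'w measure \<Rightarrow> nat \<Rightarrow> 'z measure
     \<Rightarrow> ((nat \<Rightarrow> 'z) \<Rightarrow> 'w measure) \<Rightarrow> ((nat \<Rightarrow> 'z) \<times> 'w) measure" where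
  "joint_law MZ MW n \<mu>' A =
     PiM {..<n} (\<lambda>_. \<mu>') \<bind>
       (\<lambda>s. A s \<bind> (\<lambda>w. return (PiM {..<n} (\<lambda>_. MZ) \<Otimes>\<^sub>M MW) (s, w)))"

definition gen :: "'z measure \<Rightarrow> 'w measure \<Rightarrow> nat \<Rightarrow> ('w \<Rightarrow> 'z \<Rightarrow> real) \<Rightarrow> 'z measure
     \<Rightarrow> 'z measure \<Rightarrow> ((nat \<Rightarrow> 'z) \<Rightarrow> 'w measure) \<Rightarrow> ereal" where
  "gen MZ MW n loss \<mu> \<mu>' A =
     enn2ereal (\<integral>\<^sup>+ p. pop_risk \<mu> loss (snd p) \<partial>joint_law MZ MW n \<mu>' A)
   - enn2ereal (\<integral>\<^sup>+ p. ennreal (emp_risk n loss (fst p) (snd p)) \<partial>joint_law MZ MW n \<mu>' A)"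

definition D4 :: "'w measure \<Rightarrow> 'z measure \<Rightarrow> ('w \<Rightarrow> 'z \<Rightarrow> real) \<Rightarrow> 'z measure \<Rightarrow> 'z measure
     \<Rightarrow> ereal \<Rightarrow> 'w measure set \<Rightarrow> ereal" where
  "D4 MW MZ loss \<mu> \<mu>' r \<M> =
     (INF \<nu>\<in>\<M>. INF P\<in>{P \<in> couplings MW MZ \<nu> \<mu>'. mutual_inf MW MZ P \<le> r}.
        enn2ereal (\<integral>\<^sup>+ p. pop_risk \<mu> loss (fst p) \<partial>P)
      - enn2ereal (\<integral>\<^sup>+ p. ennreal (loss (fst p) (snd p)) \<partial>P))"

end

theory Submission
  imports Defs
begin

(* The witness for the infimum in D4 is the mixture P = (1/n) \<Sum>\<^sub>i Law(W', Z'\<^sub>i).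
  Its marginals are Law(W') and \<mu>', and its expected gap E\<^sub>P[L\<^sub>\<mu>(W) - \<ell>(W, Z)] is exactly gen.
  It remains to show n I(P) \<le> I(S'; W'). Let f be the density of P with respect to
  Law(W') \<Otimes> \<mu>' and F that of Law(S', W') with respect to \<mu>'\<^sup>n \<Otimes> Law(W'). Since f(w, -) is a
  probability density for almost every w, G(s, w) = \<Prod>\<^sub>i f(w, s\<^sub>i) integrates to 1 against
  \<mu>'\<^sup>n \<Otimes> Law(W'), so Gibbs' inequality E[ln G(S', W')] \<le> E[ln F(S', W')] holds; its left-hand side
  is n I(P) and its right-hand side is I(S'; W'). *)

lemma emeasure_distr_eq_nn_integral:
  assumes "f \<in> measurable M N" and "B \<in> sets N"
  shows "emeasure (distr M N f) B = (\<integral>\<^sup>+ x. indicator B (f x) \<partial>M)"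
  using assms by (simp add: nn_integral_distr[symmetric])

lemma neg_mult_ln_le_one:
  fixes x :: real
  assumes "0 \<le> x"
  shows "- (x * ln x) \<le> 1"
proof (cases "x = 0")
  case False
  with assms have "0 < x" by simp
  then have "ln (1 / x) \<le> 1 / x - 1" by (intro ln_le_minus_one) simp
  with \<open>0 < x\<close> have "x * - ln x \<le> x * (1 / x - 1)" by (intro mult_left_mono) (auto simp: ln_div)
  with \<open>0 < x\<close> show ?thesis by (simp add: algebra_simps)
qed simp

lemma enn2ereal_diff_scaled_le:
  fixes a b d e :: ennreal and r :: real
  assumes le: "a + d \<le> b + e" and fin: "d < \<infinity>" "e < \<infinity>" and r: "0 < r"
  shows "enn2ereal (ennreal (1 / r) * a) - enn2ereal (ennreal (1 / r) * e)
       \<le> (enn2ereal b - enn2ereal d) / ereal r"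
proof (cases "b = \<infinity>")
  case True
  with fin r show ?thesis by (cases d) auto
next
  case False
  have "a \<le> b + e" using le by (rule order_trans[rotated]) simp
  also have "\<dots> < \<infinity>" using False fin by (simp add: less_top)
  finally have "a < \<infinity>" .
  obtain a' where a: "a = ennreal a'" "0 \<le> a'" using \<open>a < \<infinity>\<close> by (cases a) auto
  obtain b' where b: "b = ennreal b'" "0 \<le> b'" using False by (cases b) auto
  obtain d' where d: "d = ennreal d'" "0 \<le> d'" using fin(1) by (cases d) auto
  obtain e' where e: "e = ennreal e'" "0 \<le> e'" using fin(2) by (cases e) auto
  from le have "a' - e' \<le> b' - d'"
    unfolding a b d e using a b d e by (simp add: ennreal_plus[symmetric] del: ennreal_plus)
  with r show ?thesis
    unfolding a b d e using a b d e
    by (simp add: ennreal_mult'[symmetric] diff_divide_distrib[symmetric] divide_right_mono)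
qed

definition real_RN_deriv :: "'a measure \<Rightarrow> 'a measure \<Rightarrow> 'a \<Rightarrow> real" where
  "real_RN_deriv R M x = enn2real (RN_deriv R M x)"

lemma real_RN_deriv_nonneg: "0 \<le> real_RN_deriv R M x"
  by (simp add: real_RN_deriv_def)

lemma borel_measurable_real_RN_deriv [measurable]: "real_RN_deriv R M \<in> borel_measurable R"
  unfolding real_RN_deriv_def by simp

lemma nn_integral_log_density:
  assumes M: "M = density R (\<lambda>x. ennreal (g x))"
    and g: "g \<in> borel_measurable R" "\<And>x. 0 \<le> g x"
  shows "(\<integral>\<^sup>+ x. ennreal (ln (g x)) \<partial>M) = (\<integral>\<^sup>+ x. ennreal (g x * ln (g x)) \<partial>R)"
    and "(\<integral>\<^sup>+ x. ennreal (- ln (g x)) \<partial>M) = (\<integral>\<^sup>+ x. ennreal (- (g x * ln (g x))) \<partial>R)"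
  using g unfolding M
  by (auto simp: nn_integral_density ennreal_mult'[symmetric] intro!: nn_integral_cong)

context
  fixes R M :: "'a measure"
  assumes R: "sigma_finite_measure R" and M: "sigma_finite_measure M"
    and ac: "absolutely_continuous R M" and sets_eq: "sets M = sets R"
begin

lemma density_real_RN_deriv: "M = density R (\<lambda>x. ennreal (real_RN_deriv R M x))"
proof -
  interpret R: sigma_finite_measure R by fact
  have "AE x in R. RN_deriv R M x \<noteq> \<infinity>"
    using M ac sets_eq by (intro R.RN_deriv_finite)
  then have "density R (RN_deriv R M) = density R (\<lambda>x. ennreal (real_RN_deriv R M x))"
    unfolding real_RN_deriv_def by (intro density_cong) (auto simp: less_top)
  with R.density_RN_deriv[OF ac sets_eq] show ?thesis by simp
qed

lemma KL_div_eq_log_parts: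
  "KL_div M R = enn2ereal (\<integral>\<^sup>+ x. ennreal (ln (real_RN_deriv R M x)) \<partial>M)
              - enn2ereal (\<integral>\<^sup>+ x. ennreal (- ln (real_RN_deriv R M x)) \<partial>M)"
  using nn_integral_log_density[OF density_real_RN_deriv borel_measurable_real_RN_deriv
      real_RN_deriv_nonneg] ac sets_eq
  by (simp add: KL_div_def Let_def real_RN_deriv_def)

lemma nn_integral_neg_log_RN_deriv_le_1:
  assumes "prob_space R"
  shows "(\<integral>\<^sup>+ x. ennreal (- ln (real_RN_deriv R M x)) \<partial>M) \<le> 1"
proof -
  have "(\<integral>\<^sup>+ x. ennreal (- ln (real_RN_deriv R M x)) \<partial>M) \<le> (\<integral>\<^sup>+ x. 1 \<partial>R)"
    unfolding nn_integral_log_density[OF density_real_RN_deriv borel_measurable_real_RN_deriv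
      real_RN_deriv_nonneg]
    by (intro nn_integral_mono) (metis ennreal_le_1 neg_mult_ln_le_one real_RN_deriv_nonneg)
  then show ?thesis using prob_space.emeasure_space_1[OF assms] by simp
qed

lemma AE_real_RN_deriv_pos: "AE x in M. 0 < real_RN_deriv R M x"
proof -
  have "AE x in density R (\<lambda>x. ennreal (real_RN_deriv R M x)). 0 < real_RN_deriv R M x"
    by (subst AE_density) auto
  then show ?thesis by (simp only: density_real_RN_deriv[symmetric])
qed

end

(* Gibbs' inequality E\<^sub>M[ln G] \<le> E\<^sub>M[ln F] for a density F of M and a sub-probability
  density G; ln G is given as a difference u - v of nonnegative functions, and ln F is split
  into its positive and negative parts, so that every integral is nonnegative. *)
lemma nn_integral_log_ratio_le:
  assumes M: "M = density R (\<lambda>x. ennreal (F x))" "prob_space M"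
    and F: "F \<in> borel_measurable R" "\<And>x. 0 \<le> F x"
    and G: "G \<in> borel_measurable R" "\<And>x. 0 \<le> G x" "(\<integral>\<^sup>+ x. ennreal (G x) \<partial>R) \<le> 1"
    and uv: "u \<in> borel_measurable R" "v \<in> borel_measurable R" "\<And>x. 0 \<le> u x" "\<And>x. 0 \<le> v x"
    and log_G: "AE x in M. 0 < G x \<and> ln (G x) = u x - v x"
  shows "(\<integral>\<^sup>+ x. ennreal (u x) \<partial>M) + (\<integral>\<^sup>+ x. ennreal (- ln (F x)) \<partial>M)
       \<le> (\<integral>\<^sup>+ x. ennreal (ln (F x)) \<partial>M) + (\<integral>\<^sup>+ x. ennreal (v x) \<partial>M)"
proof -
  have sets_M: "sets M = sets R" using M(1) by simp
  note meas = measurable_cong_sets[OF sets_M refl]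
  have ratio: "(\<integral>\<^sup>+ x. ennreal (G x / F x) \<partial>M) \<le> 1"
  proof -
    have "(\<integral>\<^sup>+ x. ennreal (G x / F x) \<partial>M) = (\<integral>\<^sup>+ x. ennreal (F x) * ennreal (G x / F x) \<partial>R)"
      unfolding M(1) using F G by (intro nn_integral_density) auto
    also have "\<dots> \<le> (\<integral>\<^sup>+ x. ennreal (G x) \<partial>R)"
      using F(2) G(2) by (intro nn_integral_mono) (auto simp: ennreal_mult'[symmetric])
    finally show ?thesis using G(3) by simp
  qed
  have pointwise: "ennreal (u x) + ennreal (- ln (F x)) + 1
      \<le> ennreal (ln (F x)) + ennreal (v x) + ennreal (G x / F x)"
    if "0 < F x" "0 < G x" "ln (G x) = u x - v x" for x
  proof -
    have "ln (G x / F x) \<le> G x / F x - 1"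
      using that by (intro ln_le_minus_one) simp
    then have "u x + max (- ln (F x)) 0 + 1 \<le> max (ln (F x)) 0 + v x + G x / F x"
      using that by (simp add: ln_div)
    then have "ennreal (u x + max (- ln (F x)) 0 + 1) \<le> ennreal (max (ln (F x)) 0 + v x + G x / F x)"
      by (rule ennreal_leI)
    then show ?thesis
      using that uv(3,4) by (simp add: ennreal_plus ennreal_max_0)
  qed
  have "AE x in M. 0 < F x" unfolding M(1) using F by (simp add: AE_density)
  have "(\<integral>\<^sup>+ x. ennreal (u x) \<partial>M) + (\<integral>\<^sup>+ x. ennreal (- ln (F x)) \<partial>M) + 1
      = (\<integral>\<^sup>+ x. ennreal (u x) + ennreal (- ln (F x)) + 1 \<partial>M)"
    using F uv prob_space.emeasure_space_1[OF M(2)] by (simp add: nn_integral_add meas)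
  also have "\<dots> \<le> (\<integral>\<^sup>+ x. ennreal (ln (F x)) + ennreal (v x) + ennreal (G x / F x) \<partial>M)"
    using \<open>AE x in M. 0 < F x\<close> log_G
    by (intro nn_integral_mono_AE, eventually_elim) (simp add: pointwise)
  also have "\<dots> = (\<integral>\<^sup>+ x. ennreal (ln (F x)) \<partial>M) + (\<integral>\<^sup>+ x. ennreal (v x) \<partial>M)
      + (\<integral>\<^sup>+ x. ennreal (G x / F x) \<partial>M)"
    using F G uv by (simp add: nn_integral_add meas)
  also have "\<dots> \<le> (\<integral>\<^sup>+ x. ennreal (ln (F x)) \<partial>M) + (\<integral>\<^sup>+ x. ennreal (v x) \<partial>M) + 1"
    using ratio by (rule add_left_mono)
  finally show ?thesis by (simp add: ennreal_add_left_cancel_le add.commute[of _ 1])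
qed

lemma nn_integral_PiM_component:
  assumes "prob_space M" "i \<in> I" "f \<in> borel_measurable M"
  shows "(\<integral>\<^sup>+ s. f (s i) \<partial>PiM I (\<lambda>_. M)) = (\<integral>\<^sup>+ x. f x \<partial>M)"
proof -
  have "(\<integral>\<^sup>+ x. f x \<partial>M) = (\<integral>\<^sup>+ x. f x \<partial>distr (PiM I (\<lambda>_. M)) M (\<lambda>s. s i))"
    using distr_PiM_component[of I "\<lambda>_. M" i] assms by simp
  also have "\<dots> = (\<integral>\<^sup>+ s. f (s i) \<partial>PiM I (\<lambda>_. M))"
    using assms by (intro nn_integral_distr) auto
  finally show ?thesis by simp
qed

lemma AE_fiber_integral_density_eq_1:
  assumes M1: "sigma_finite_measure M1" and M2: "sigma_finite_measure M2"
    and g: "g \<in> borel_measurable (M1 \<Otimes>\<^sub>M M2)" "\<And>x. 0 \<le> g x"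
    and marginal: "distr (density (M1 \<Otimes>\<^sub>M M2) (\<lambda>x. ennreal (g x))) M1 fst = M1"
  shows "AE x in M1. (\<integral>\<^sup>+ y. ennreal (g (x, y)) \<partial>M2) = 1"
proof -
  interpret M1: sigma_finite_measure M1 by fact
  interpret M2: sigma_finite_measure M2 by fact
  have g': "(\<lambda>x. ennreal (g x)) \<in> borel_measurable (M1 \<Otimes>\<^sub>M M2)" using g by simp
  show ?thesis
  proof (rule M1.density_unique2)
    show "(\<lambda>x. \<integral>\<^sup>+ y. ennreal (g (x, y)) \<partial>M2) \<in> borel_measurable M1"
      using M2.borel_measurable_nn_integral[of "\<lambda>x y. ennreal (g (x, y))"] g' by simp
    fix A assume A: "A \<in> sets M1"
    have "(\<integral>\<^sup>+ x \<in> A. (\<integral>\<^sup>+ y. ennreal (g (x, y)) \<partial>M2) \<partial>M1)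
        = (\<integral>\<^sup>+ x. \<integral>\<^sup>+ y. ennreal (g (x, y)) * indicator A x \<partial>M2 \<partial>M1)"
      using measurable_Pair2[OF g'] by (intro nn_integral_cong) (simp add: nn_integral_multc)
    also have "\<dots> = (\<integral>\<^sup>+ p. ennreal (g p) * indicator A (fst p) \<partial>(M1 \<Otimes>\<^sub>M M2))"
      using M2.nn_integral_fst[of "\<lambda>p. ennreal (g p) * indicator A (fst p)" M1] g' A by simp
    also have "\<dots> = (\<integral>\<^sup>+ p. indicator A (fst p) \<partial>density (M1 \<Otimes>\<^sub>M M2) (\<lambda>x. ennreal (g x)))"
      using g' A by (intro nn_integral_density[symmetric]) auto
    also have "\<dots> = emeasure M1 A"
      using A emeasure_distr_eq_nn_integral[of fst "density (M1 \<Otimes>\<^sub>M M2) (\<lambda>x. ennreal (g x))" M1 A]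
      by (simp add: marginal)
    finally show "(\<integral>\<^sup>+ x \<in> A. (\<integral>\<^sup>+ y. ennreal (g (x, y)) \<partial>M2) \<partial>M1) = (\<integral>\<^sup>+ x \<in> A. 1 \<partial>M1)"
      using A by simp
  qed simp
qed

lemma borel_measurable_pop_risk:
  assumes "sigma_finite_measure \<mu>" "sets \<mu> = sets MZ"
    and "(\<lambda>(w, z). loss w z) \<in> borel_measurable (MW \<Otimes>\<^sub>M MZ)"
  shows "pop_risk \<mu> loss \<in> borel_measurable MW"
proof -
  have "(\<lambda>(w, z). ennreal (loss w z)) \<in> borel_measurable (MW \<Otimes>\<^sub>M \<mu>)"
    using assms(2,3) by (simp add: measurable_cong_sets[OF sets_pair_measure_cong[OF refl assms(2)] refl])
  then show ?thesis
    unfolding pop_risk_def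
    by (rule sigma_finite_measure.borel_measurable_nn_integral[OF assms(1), of "\<lambda>w z. ennreal (loss w z)", simplified])
qed

locale sample_kernel =
  fixes MZ :: "'z measure" and MW :: "'w measure"
    and \<mu>' :: "'z measure" and n :: nat
    and A :: "(nat \<Rightarrow> 'z) \<Rightarrow> 'w measure"
  assumes mu': "prob_space \<mu>'" "sets \<mu>' = sets MZ"
    and n: "0 < n"
    and kernel: "A \<in> PiM {..<n} (\<lambda>_. MZ) \<rightarrow>\<^sub>M prob_algebra MW"
begin

abbreviation "Zn \<equiv> PiM {..<n} (\<lambda>_. MZ)"
abbreviation "\<mu>n \<equiv> PiM {..<n} (\<lambda>_. \<mu>')"
abbreviation "J \<equiv> joint_law MZ MW n \<mu>' A"
abbreviation "\<nu> \<equiv> distr J MW snd"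
abbreviation "indep_J \<equiv> \<mu>n \<Otimes>\<^sub>M \<nu>"
abbreviation "indep_mix \<equiv> \<nu> \<Otimes>\<^sub>M \<mu>'"

lemma sets_mun: "sets \<mu>n = sets Zn"
  by (rule sets_PiM_cong) (auto simp: mu')

lemma space_mun: "space \<mu>n = space Zn"
  using sets_mun by (rule sets_eq_imp_space_eq)

lemma prob_mun: "prob_space \<mu>n"
  by (intro prob_space_PiM) (simp add: mu')

lemma A_measurable: "A \<in> measurable \<mu>n (subprob_algebra MW)"
  using measurable_prob_algebraD[OF kernel] by (simp add: measurable_cong_sets[OF sets_mun refl])

lemma prob_A: "s \<in> space \<mu>n \<Longrightarrow> prob_space (A s)"
  and sets_A: "s \<in> space \<mu>n \<Longrightarrow> sets (A s) = sets MW"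
  using kernel by (auto simp: space_mun space_prob_algebra dest: measurable_space)

definition pair_kernel :: "(nat \<Rightarrow> 'z) \<Rightarrow> ((nat \<Rightarrow> 'z) \<times> 'w) measure" where
  "pair_kernel s = A s \<bind> (\<lambda>w. return (Zn \<Otimes>\<^sub>M MW) (s, w))"

lemma pair_kernel_measurable: "pair_kernel \<in> measurable \<mu>n (subprob_algebra (Zn \<Otimes>\<^sub>M MW))"
  unfolding pair_kernel_def
proof (rule measurable_bind'[OF A_measurable])
  have "(\<lambda>x. x) \<in> measurable (\<mu>n \<Otimes>\<^sub>M MW) (Zn \<Otimes>\<^sub>M MW)"
    by (simp add: measurable_ident_sets sets_pair_measure_cong[OF sets_mun refl])
  then show "(\<lambda>(s, w). return (Zn \<Otimes>\<^sub>M MW) (s, w)) \<in> measurable (\<mu>n \<Otimes>\<^sub>M MW) (subprob_algebra (Zn \<Otimes>\<^sub>M MW))"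
    using measurable_compose[OF _ return_measurable] by (simp add: case_prod_beta')
qed

lemma joint_law_eq_bind: "J = \<mu>n \<bind> pair_kernel"
  unfolding joint_law_def pair_kernel_def ..

lemma sets_J: "sets J = sets (Zn \<Otimes>\<^sub>M MW)"
  unfolding joint_law_eq_bind
  by (rule sets_bind[OF sets_kernel[OF pair_kernel_measurable] prob_space.not_empty[OF prob_mun]])

lemmas measurable_J = measurable_cong_sets[OF sets_J refl]

lemma nn_integral_joint_law:
  assumes h: "h \<in> borel_measurable (Zn \<Otimes>\<^sub>M MW)"
  shows "(\<integral>\<^sup>+ p. h p \<partial>J) = (\<integral>\<^sup>+ s. \<integral>\<^sup>+ w. h (s, w) \<partial>A s \<partial>\<mu>n)"
proof -
  have "(\<integral>\<^sup>+ p. h p \<partial>J) = (\<integral>\<^sup>+ s. \<integral>\<^sup>+ p. h p \<partial>pair_kernel s \<partial>\<mu>n)"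
    unfolding joint_law_eq_bind by (rule nn_integral_bind[OF h pair_kernel_measurable])
  also have "\<dots> = (\<integral>\<^sup>+ s. \<integral>\<^sup>+ w. h (s, w) \<partial>A s \<partial>\<mu>n)"
  proof (rule nn_integral_cong)
    fix s assume s: "s \<in> space \<mu>n"
    have "(\<lambda>w. (s, w)) \<in> measurable (A s) (Zn \<Otimes>\<^sub>M MW)"
      using s by (simp add: measurable_cong_sets[OF sets_A[OF s] refl] space_mun)
    then have ret: "(\<lambda>w. return (Zn \<Otimes>\<^sub>M MW) (s, w)) \<in> measurable (A s) (subprob_algebra (Zn \<Otimes>\<^sub>M MW))"
      using measurable_compose[OF _ return_measurable] by blast
    have "(\<integral>\<^sup>+ p. h p \<partial>pair_kernel s) = (\<integral>\<^sup>+ w. \<integral>\<^sup>+ p. h p \<partial>return (Zn \<Otimes>\<^sub>M MW) (s, w) \<partial>A s)"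
      unfolding pair_kernel_def by (rule nn_integral_bind[OF h ret])
    also have "\<dots> = (\<integral>\<^sup>+ w. h (s, w) \<partial>A s)"
    proof (rule nn_integral_cong)
      fix w assume "w \<in> space (A s)"
      then have "(s, w) \<in> space (Zn \<Otimes>\<^sub>M MW)"
        using s sets_eq_imp_space_eq[OF sets_A[OF s]] by (simp add: space_pair_measure space_mun)
      then show "(\<integral>\<^sup>+ p. h p \<partial>return (Zn \<Otimes>\<^sub>M MW) (s, w)) = h (s, w)"
        using h by (simp add: nn_integral_return)
    qed
    finally show "(\<integral>\<^sup>+ p. h p \<partial>pair_kernel s) = (\<integral>\<^sup>+ w. h (s, w) \<partial>A s)" .
  qed
  finally show ?thesis .
qed

lemma nn_integral_joint_law_sample:
  assumes "h \<in> borel_measurable Zn"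
  shows "(\<integral>\<^sup>+ p. h (fst p) \<partial>J) = (\<integral>\<^sup>+ s. h s \<partial>\<mu>n)"
  using assms by (subst nn_integral_joint_law) (auto intro!: nn_integral_cong simp: prob_space.emeasure_space_1[OF prob_A])

lemma prob_J: "prob_space J"
  by (rule prob_spaceI) (use nn_integral_joint_law_sample[of "\<lambda>_. 1"] prob_space.emeasure_space_1[OF prob_mun] in simp)

lemma distr_J_fst: "distr J Zn fst = \<mu>n"
proof (rule measure_eqI)
  fix X assume "X \<in> sets (distr J Zn fst)"
  then have X: "X \<in> sets Zn" by simp
  then show "emeasure (distr J Zn fst) X = emeasure \<mu>n X"
    using nn_integral_joint_law_sample[of "indicator X"] sets_mun
    by (simp add: emeasure_distr_eq_nn_integral measurable_J)
qed (simp add: sets_mun)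

lemma prob_nu: "prob_space \<nu>"
  by (rule prob_space.prob_space_distr[OF prob_J]) (simp add: measurable_J)

lemma mutual_inf_joint_law: "mutual_inf Zn MW J = KL_div J indep_J"
  unfolding mutual_inf_def distr_J_fst ..

lemma component_measurable: "i < n \<Longrightarrow> (\<lambda>p. (snd p, fst p i)) \<in> measurable J (MW \<Otimes>\<^sub>M MZ)"
  by (simp add: measurable_J)

definition mixture :: "('w \<times> 'z) measure" where
  "mixture = scale_measure (ennreal (1 / real n))
     (distr (count_space {..<n} \<Otimes>\<^sub>M J) (MW \<Otimes>\<^sub>M MZ) (\<lambda>(i, p). (snd p, fst p i)))"

lemma sets_mixture: "sets mixture = sets (MW \<Otimes>\<^sub>M MZ)"
  by (simp add: mixture_def)

lemmas measurable_mixture = measurable_cong_sets[OF sets_mixture refl]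

lemma nn_integral_mixture:
  assumes h: "h \<in> borel_measurable (MW \<Otimes>\<^sub>M MZ)"
  shows "(\<integral>\<^sup>+ x. h x \<partial>mixture) = ennreal (1 / real n) * (\<Sum>i<n. \<integral>\<^sup>+ p. h (snd p, fst p i) \<partial>J)"
proof -
  interpret J: sigma_finite_measure J using prob_J by (rule prob_space_imp_sigma_finite)
  have mix: "(\<lambda>(i, p). (snd p, fst p i)) \<in> measurable (count_space {..<n} \<Otimes>\<^sub>M J) (MW \<Otimes>\<^sub>M MZ)"
    by (rule measurable_pair_measure_countable1) (simp_all add: component_measurable)
  have "(\<integral>\<^sup>+ x. h x \<partial>distr (count_space {..<n} \<Otimes>\<^sub>M J) (MW \<Otimes>\<^sub>M MZ) (\<lambda>(i, p). (snd p, fst p i)))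
      = (\<integral>\<^sup>+ x. h (case x of (i, p) \<Rightarrow> (snd p, fst p i)) \<partial>(count_space {..<n} \<Otimes>\<^sub>M J))"
    using h mix by (intro nn_integral_distr) auto
  also have "\<dots> = (\<Sum>i<n. \<integral>\<^sup>+ p. h (snd p, fst p i) \<partial>J)"
    using h mix by (subst J.nn_integral_fst[symmetric]) (auto simp: nn_integral_count_space_finite)
  finally show ?thesis
    unfolding mixture_def using h by (simp add: nn_integral_scale_measure)
qed

lemma nn_integral_mixture_eqI:
  assumes h: "h \<in> borel_measurable (MW \<Otimes>\<^sub>M MZ)"
    and components: "\<And>i. i < n \<Longrightarrow> (\<integral>\<^sup>+ p. h (snd p, fst p i) \<partial>J) = c"
  shows "(\<integral>\<^sup>+ x. h x \<partial>mixture) = c"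
proof -
  have "ennreal (1 / real n) * of_nat n = 1"
    using n by (simp add: ennreal_of_nat_eq_real_of_nat ennreal_mult''[symmetric] del: ennreal_mult'')
  then show ?thesis
    using components by (simp add: nn_integral_mixture[OF h] mult.assoc[symmetric])
qed

lemma nn_integral_mixture_sum:
  assumes h: "h \<in> borel_measurable (MW \<Otimes>\<^sub>M MZ)" "\<And>x. 0 \<le> h x"
  shows "(\<integral>\<^sup>+ x. ennreal (h x) \<partial>mixture)
       = ennreal (1 / real n) * (\<integral>\<^sup>+ p. ennreal (\<Sum>i<n. h (snd p, fst p i)) \<partial>J)"
proof -
  have "(\<integral>\<^sup>+ p. ennreal (\<Sum>i<n. h (snd p, fst p i)) \<partial>J)
      = (\<integral>\<^sup>+ p. (\<Sum>i<n. ennreal (h (snd p, fst p i))) \<partial>J)"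
    using h(2) by (simp add: sum_ennreal)
  also have "\<dots> = (\<Sum>i<n. \<integral>\<^sup>+ p. ennreal (h (snd p, fst p i)) \<partial>J)"
    using h(1) by (intro nn_integral_sum) (auto intro: measurable_compose[OF component_measurable])
  finally show ?thesis
    using h by (simp add: nn_integral_mixture)
qed

lemma nn_integral_mixture_fst:
  assumes "h \<in> borel_measurable MW"
  shows "(\<integral>\<^sup>+ x. h (fst x) \<partial>mixture) = (\<integral>\<^sup>+ p. h (snd p) \<partial>J)"
  using assms by (intro nn_integral_mixture_eqI) simp_all

lemma prob_mixture: "prob_space mixture"
  by (rule prob_spaceI)
    (use nn_integral_mixture_eqI[of "\<lambda>_. 1" 1] prob_space.emeasure_space_1[OF prob_J] in simp)

lemma distr_mixture_fst: "distr mixture MW fst = \<nu>"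
proof (rule measure_eqI)
  fix B assume "B \<in> sets (distr mixture MW fst)"
  then have B: "B \<in> sets MW" by simp
  have "(\<integral>\<^sup>+ x. indicator B (fst x) \<partial>mixture) = emeasure \<nu> B"
    using B by (simp add: nn_integral_mixture_fst emeasure_distr_eq_nn_integral measurable_J)
  with B show "emeasure (distr mixture MW fst) B = emeasure \<nu> B"
    by (simp add: emeasure_distr_eq_nn_integral measurable_mixture)
qed simp

lemma distr_mixture_snd: "distr mixture MZ snd = \<mu>'"
proof (rule measure_eqI)
  fix B assume "B \<in> sets (distr mixture MZ snd)"
  then have B: "B \<in> sets MZ" by simp
  have "(\<integral>\<^sup>+ p. indicator B (fst p i) \<partial>J) = emeasure \<mu>' B" if "i < n" for i
    using B that mu' nn_integral_joint_law_sample[of "\<lambda>s. indicator B (s i)"]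
      nn_integral_PiM_component[of \<mu>' i "{..<n}" "indicator B"]
    by simp
  then have "(\<integral>\<^sup>+ x. indicator B (snd x) \<partial>mixture) = emeasure \<mu>' B"
    using B by (intro nn_integral_mixture_eqI) simp_all
  with B show "emeasure (distr mixture MZ snd) B = emeasure \<mu>' B"
    by (simp add: emeasure_distr_eq_nn_integral measurable_mixture)
qed (simp add: mu')

lemma mixture_coupling: "mixture \<in> couplings MW MZ \<nu> \<mu>'"
  unfolding couplings_def
  using prob_mixture sets_mixture distr_mixture_fst distr_mixture_snd by simp

lemma sets_indep_J: "sets indep_J = sets (Zn \<Otimes>\<^sub>M MW)"
  by (rule sets_pair_measure_cong) (simp_all add: sets_mun)

lemma sets_indep_mix: "sets indep_mix = sets (MW \<Otimes>\<^sub>M MZ)"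
  by (rule sets_pair_measure_cong) (simp_all add: mu')

lemmas measurable_indep_J = measurable_cong_sets[OF sets_indep_J refl]
lemmas measurable_indep_mix = measurable_cong_sets[OF sets_indep_mix refl]

lemma prob_indep_J: "prob_space indep_J"
  using prob_nu prob_mun by (intro prob_space_pair) auto

lemma prob_indep_mix: "prob_space indep_mix"
  using prob_nu mu' by (intro prob_space_pair) auto

lemma nn_integral_indep_J_component:
  assumes g: "g \<in> borel_measurable (MW \<Otimes>\<^sub>M MZ)" and i: "i < n"
  shows "(\<integral>\<^sup>+ p. g (snd p, fst p i) \<partial>indep_J) = (\<integral>\<^sup>+ x. g x \<partial>indep_mix)"
proof -
  interpret pair_sigma_finite \<mu>n \<nu>
    using prob_mun prob_nu by (intro pair_sigma_finite.intro) (auto intro: prob_space_imp_sigma_finite)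
  interpret \<mu>': sigma_finite_measure \<mu>' using mu' by (auto intro: prob_space_imp_sigma_finite)
  have "(\<integral>\<^sup>+ p. g (snd p, fst p i) \<partial>indep_J) = (\<integral>\<^sup>+ w. \<integral>\<^sup>+ s. g (w, s i) \<partial>\<mu>n \<partial>\<nu>)"
    using nn_integral_snd[of "\<lambda>p. g (snd p, fst p i)"] g i by (simp add: measurable_indep_J)
  also have "\<dots> = (\<integral>\<^sup>+ w. \<integral>\<^sup>+ z. g (w, z) \<partial>\<mu>' \<partial>\<nu>)"
    using measurable_Pair2[of g] g i mu'
    by (intro nn_integral_cong nn_integral_PiM_component) (auto simp: measurable_indep_mix)
  also have "\<dots> = (\<integral>\<^sup>+ x. g x \<partial>indep_mix)"
    using \<mu>'.nn_integral_fst[of g \<nu>] g by (simp add: measurable_indep_mix)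
  finally show ?thesis .
qed

lemma AE_component_of_mixture:
  assumes \<Phi>: "Measurable.pred (MW \<Otimes>\<^sub>M MZ) \<Phi>" and AE: "AE x in mixture. \<Phi> x" and i: "i < n"
  shows "AE p in J. \<Phi> (snd p, fst p i)"
proof -
  have "(\<integral>\<^sup>+ x. indicator {x. \<not> \<Phi> x} x \<partial>mixture) = 0"
    using AE \<Phi> by (subst nn_integral_0_iff_AE) (auto simp: measurable_mixture elim: AE_mp)
  then have "(\<Sum>i<n. \<integral>\<^sup>+ p. indicator {x. \<not> \<Phi> x} (snd p, fst p i) \<partial>J) = 0"
    using n \<Phi> by (simp add: nn_integral_mixture)
  then have "(\<integral>\<^sup>+ p. indicator {x. \<not> \<Phi> x} (snd p, fst p i) \<partial>J) = 0"
    using i by simp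
  then have "AE p in J. indicator {x. \<not> \<Phi> x} (snd p, fst p i) = (0::ennreal)"
    using \<Phi> i by (subst (asm) nn_integral_0_iff_AE) (simp_all add: measurable_J)
  then show ?thesis
    by eventually_elim (simp split: split_indicator_asm)
qed

lemma mixture_absolutely_continuous:
  assumes ac: "absolutely_continuous indep_J J"
  shows "absolutely_continuous indep_mix mixture"
  unfolding absolutely_continuous_def
proof
  fix N assume N: "N \<in> null_sets indep_mix"
  then have N_indep: "N \<in> sets indep_mix" by blast
  then have N_sets: "N \<in> sets (MW \<Otimes>\<^sub>M MZ)" unfolding sets_indep_mix .
  have "(\<integral>\<^sup>+ p. indicator N (snd p, fst p i) \<partial>J) = 0" if i: "i < n" for i
  proof -
    have "(\<integral>\<^sup>+ p. indicator N (snd p, fst p i) \<partial>indep_J) = 0"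
      using null_setsD1[OF N] N_indep N_sets i by (simp add: nn_integral_indep_J_component)
    then have "AE p in indep_J. indicator N (snd p, fst p i) = (0::ennreal)"
      using N_sets i by (subst (asm) nn_integral_0_iff_AE) (auto simp: measurable_indep_J)
    then have "AE p in J. indicator N (snd p, fst p i) = (0::ennreal)"
      by (rule absolutely_continuous_AE[OF sets_J[folded sets_indep_J] ac])
    then show ?thesis
      using N_sets i by (subst nn_integral_0_iff_AE) (auto simp: measurable_J)
  qed
  then have "emeasure mixture N = 0"
    using N_sets by (simp add: nn_integral_mixture flip: nn_integral_indicator add: sets_mixture)
  then show "N \<in> null_sets mixture"
    using N_sets by (simp add: null_sets_def sets_mixture)
qed

lemma mutual_inf_mixture: "mutual_inf MW MZ mixture = KL_div mixture indep_mix"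
  unfolding mutual_inf_def distr_mixture_fst distr_mixture_snd ..

context
  assumes ac: "absolutely_continuous indep_J J"
begin

abbreviation "f \<equiv> real_RN_deriv indep_mix mixture"

lemma borel_measurable_mixture_density [measurable]: "f \<in> borel_measurable (MW \<Otimes>\<^sub>M MZ)"
  using borel_measurable_real_RN_deriv[of indep_mix mixture] by (simp only: measurable_indep_mix)

lemma mixture_density_facts:
  "mixture = density indep_mix (\<lambda>x. ennreal (f x))"
  "KL_div mixture indep_mix = enn2ereal (\<integral>\<^sup>+ x. ennreal (ln (f x)) \<partial>mixture)
                            - enn2ereal (\<integral>\<^sup>+ x. ennreal (- ln (f x)) \<partial>mixture)"
  "(\<integral>\<^sup>+ x. ennreal (- ln (f x)) \<partial>mixture) \<le> 1"
  "AE x in mixture. 0 < f x"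
  using prob_space_imp_sigma_finite[OF prob_indep_mix] prob_space_imp_sigma_finite[OF prob_mixture]
    mixture_absolutely_continuous[OF ac] sets_mixture[folded sets_indep_mix]
  by (rule density_real_RN_deriv KL_div_eq_log_parts
      nn_integral_neg_log_RN_deriv_le_1[OF _ _ _ _ prob_indep_mix] AE_real_RN_deriv_pos)+

lemma AE_fiber_mixture_density: "AE w in \<nu>. (\<integral>\<^sup>+ z. ennreal (f (w, z)) \<partial>\<mu>') = 1"
proof (rule AE_fiber_integral_density_eq_1)
  have "distr mixture \<nu> fst = distr mixture MW fst"
    by (rule distr_cong) simp_all
  then show "distr (density indep_mix (\<lambda>x. ennreal (f x))) \<nu> fst = \<nu>"
    by (simp add: mixture_density_facts(1)[symmetric] distr_mixture_fst)
qed (use prob_nu mu' in \<open>auto intro: prob_space_imp_sigma_finite real_RN_deriv_nonneg\<close>)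

lemma nn_integral_prod_mixture_density:
  "(\<integral>\<^sup>+ p. ennreal (\<Prod>i<n. f (snd p, fst p i)) \<partial>indep_J) = 1"
proof -
  interpret pair_sigma_finite \<mu>n \<nu>
    using prob_mun prob_nu by (intro pair_sigma_finite.intro) (auto intro: prob_space_imp_sigma_finite)
  interpret product_sigma_finite "\<lambda>_. \<mu>'"
    by (rule product_sigma_finite.intro) (rule prob_space_imp_sigma_finite[OF mu'(1)])
  have f: "(\<lambda>x. ennreal (f x)) \<in> borel_measurable (\<nu> \<Otimes>\<^sub>M \<mu>')" by simp
  have "(\<integral>\<^sup>+ p. ennreal (\<Prod>i<n. f (snd p, fst p i)) \<partial>indep_J)
      = (\<integral>\<^sup>+ p. (\<Prod>i<n. ennreal (f (snd p, fst p i))) \<partial>indep_J)"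
    by (simp add: prod_ennreal real_RN_deriv_nonneg)
  also have "\<dots> = (\<integral>\<^sup>+ w. \<integral>\<^sup>+ s. (\<Prod>i<n. ennreal (f (w, s i))) \<partial>\<mu>n \<partial>\<nu>)"
    by (subst nn_integral_snd[symmetric]) (simp_all add: measurable_indep_J)
  also have "\<dots> = (\<integral>\<^sup>+ w. (\<integral>\<^sup>+ z. ennreal (f (w, z)) \<partial>\<mu>') ^ n \<partial>\<nu>)"
  proof (rule nn_integral_cong)
    fix w assume "w \<in> space \<nu>"
    then show "(\<integral>\<^sup>+ s. (\<Prod>i<n. ennreal (f (w, s i))) \<partial>\<mu>n) = (\<integral>\<^sup>+ z. ennreal (f (w, z)) \<partial>\<mu>') ^ n"
      using product_nn_integral_prod[of "{..<n}" "\<lambda>_ z. ennreal (f (w, z))"] measurable_Pair2[OF f]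
      by simp
  qed
  also have "\<dots> = (\<integral>\<^sup>+ w. 1 \<partial>\<nu>)"
    using AE_fiber_mixture_density by (intro nn_integral_cong_AE) auto
  finally show ?thesis using prob_space.emeasure_space_1[OF prob_nu] by simp
qed

abbreviation "F \<equiv> real_RN_deriv indep_J J"

lemma borel_measurable_joint_density [measurable]: "F \<in> borel_measurable (Zn \<Otimes>\<^sub>M MW)"
  using borel_measurable_real_RN_deriv[of indep_J J] by (simp only: measurable_indep_J)

lemma joint_density_facts:
  "J = density indep_J (\<lambda>x. ennreal (F x))"
  "KL_div J indep_J = enn2ereal (\<integral>\<^sup>+ x. ennreal (ln (F x)) \<partial>J)
                    - enn2ereal (\<integral>\<^sup>+ x. ennreal (- ln (F x)) \<partial>J)"
  "(\<integral>\<^sup>+ x. ennreal (- ln (F x)) \<partial>J) \<le> 1"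
  using prob_space_imp_sigma_finite[OF prob_indep_J] prob_space_imp_sigma_finite[OF prob_J]
    ac sets_J[folded sets_indep_J]
  by (rule density_real_RN_deriv KL_div_eq_log_parts
      nn_integral_neg_log_RN_deriv_le_1[OF _ _ _ _ prob_indep_J])+

lemma AE_component_mixture_density_pos: "AE p in J. \<forall>i<n. 0 < f (snd p, fst p i)"
  using AE_component_of_mixture[OF _ mixture_density_facts(4)] by (subst AE_all_countable) auto

lemma KL_div_mixture_le: "KL_div mixture indep_mix \<le> KL_div J indep_J / ereal (real n)"
proof -
  define u where "u p = (\<Sum>i<n. max (ln (f (snd p, fst p i))) 0)" for p
  define v where "v p = (\<Sum>i<n. max (- ln (f (snd p, fst p i))) 0)" for p
  have [measurable]: "u \<in> borel_measurable indep_J" "v \<in> borel_measurable indep_J"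
    unfolding u_def v_def by (simp_all add: measurable_indep_J)
  have gibbs: "(\<integral>\<^sup>+ p. ennreal (u p) \<partial>J) + (\<integral>\<^sup>+ p. ennreal (- ln (F p)) \<partial>J)
      \<le> (\<integral>\<^sup>+ p. ennreal (ln (F p)) \<partial>J) + (\<integral>\<^sup>+ p. ennreal (v p) \<partial>J)"
  proof (rule nn_integral_log_ratio_le[OF joint_density_facts(1) prob_J])
    show "(\<integral>\<^sup>+ p. ennreal (\<Prod>i<n. f (snd p, fst p i)) \<partial>indep_J) \<le> 1"
      by (simp add: nn_integral_prod_mixture_density)
    show "AE p in J. 0 < (\<Prod>i<n. f (snd p, fst p i)) \<and> ln (\<Prod>i<n. f (snd p, fst p i)) = u p - v p"
      using AE_component_mixture_density_pos
    proof eventually_elim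
      case (elim p)
      then have "ln (\<Prod>i<n. f (snd p, fst p i)) = (\<Sum>i<n. ln (f (snd p, fst p i)))"
        by (intro ln_prod) auto
      also have "\<dots> = u p - v p"
        unfolding u_def v_def by (simp add: sum_subtractf[symmetric]) (intro sum.cong refl, linarith)
      finally show ?case using elim by (auto intro: prod_pos)
    qed
  qed (auto simp: u_def v_def measurable_indep_J real_RN_deriv_nonneg intro: sum_nonneg prod_nonneg)
  have pos: "(\<integral>\<^sup>+ x. ennreal (ln (f x)) \<partial>mixture) = ennreal (1 / real n) * (\<integral>\<^sup>+ p. ennreal (u p) \<partial>J)"
    using nn_integral_mixture_sum[of "\<lambda>x. max (ln (f x)) 0"] by (simp add: u_def ennreal_max_0)
  have neg: "(\<integral>\<^sup>+ x. ennreal (- ln (f x)) \<partial>mixture) = ennreal (1 / real n) * (\<integral>\<^sup>+ p. ennreal (v p) \<partial>J)"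
    using nn_integral_mixture_sum[of "\<lambda>x. max (- ln (f x)) 0"] by (simp add: v_def ennreal_max_0)
  have finite_v: "(\<integral>\<^sup>+ p. ennreal (v p) \<partial>J) < \<infinity>"
  proof (rule ccontr)
    assume "\<not> (\<integral>\<^sup>+ p. ennreal (v p) \<partial>J) < \<infinity>"
    then have "(\<integral>\<^sup>+ p. ennreal (v p) \<partial>J) = \<infinity>" by (simp add: less_top[symmetric])
    with n have "(\<integral>\<^sup>+ x. ennreal (- ln (f x)) \<partial>mixture) = \<infinity>"
      by (simp add: neg ennreal_mult_top)
    with mixture_density_facts(3) show False by (simp add: top_unique)
  qed
  have finite_F: "(\<integral>\<^sup>+ p. ennreal (- ln (F p)) \<partial>J) < \<infinity>"
    using joint_density_facts(3) by (simp add: le_less_trans)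
  show ?thesis
    unfolding mixture_density_facts(2) joint_density_facts(2) pos neg
    using n by (intro enn2ereal_diff_scaled_le[OF gibbs finite_F finite_v]) simp
qed

end

lemma mutual_inf_mixture_le: "mutual_inf MW MZ mixture \<le> mutual_inf Zn MW J / ereal (real n)"
proof (cases "absolutely_continuous indep_J J")
  case True
  then show ?thesis
    unfolding mutual_inf_mixture mutual_inf_joint_law by (rule KL_div_mixture_le)
next
  case False
  then have "mutual_inf Zn MW J = \<infinity>"
    unfolding mutual_inf_joint_law KL_div_def by simp
  with n show ?thesis by simp
qed

lemma nn_integral_mixture_loss_eq_emp_risk:
  assumes loss: "(\<lambda>(w, z). loss w z) \<in> borel_measurable (MW \<Otimes>\<^sub>M MZ)" "\<And>w z. 0 \<le> loss w z"
  shows "(\<integral>\<^sup>+ x. ennreal (loss (fst x) (snd x)) \<partial>mixture)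
       = (\<integral>\<^sup>+ p. ennreal (emp_risk n loss (fst p) (snd p)) \<partial>J)"
proof -
  have "(\<integral>\<^sup>+ x. ennreal (loss (fst x) (snd x)) \<partial>mixture)
      = ennreal (1 / real n) * (\<integral>\<^sup>+ p. ennreal (\<Sum>i<n. loss (snd p) (fst p i)) \<partial>J)"
    using nn_integral_mixture_sum[of "\<lambda>x. loss (fst x) (snd x)"] loss by (simp add: case_prod_beta')
  also have "\<dots> = (\<integral>\<^sup>+ p. ennreal (1 / real n) * ennreal (\<Sum>i<n. loss (snd p) (fst p i)) \<partial>J)"
  proof -
    have "(\<lambda>p. loss (snd p) (fst p i)) \<in> borel_measurable J" if "i < n" for i
      using measurable_compose[OF component_measurable[OF that] loss(1)] by simp
    then show ?thesis by (intro nn_integral_cmult[symmetric]) auto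
  qed
  also have "\<dots> = (\<integral>\<^sup>+ p. ennreal (emp_risk n loss (fst p) (snd p)) \<partial>J)"
    using loss(2) by (simp add: emp_risk_def ennreal_mult'[symmetric] sum_nonneg)
  finally show ?thesis .
qed

lemma gen_eq_mixture_risk_gap:
  assumes loss: "(\<lambda>(w, z). loss w z) \<in> borel_measurable (MW \<Otimes>\<^sub>M MZ)" "\<And>w z. 0 \<le> loss w z"
    and mu: "prob_space \<mu>" "sets \<mu> = sets MZ"
  shows "gen MZ MW n loss \<mu> \<mu>' A
       = enn2ereal (\<integral>\<^sup>+ x. pop_risk \<mu> loss (fst x) \<partial>mixture)
       - enn2ereal (\<integral>\<^sup>+ x. ennreal (loss (fst x) (snd x)) \<partial>mixture)"
  using borel_measurable_pop_risk[OF prob_space_imp_sigma_finite[OF mu(1)] mu(2) loss(1)]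
  by (simp add: gen_def nn_integral_mixture_fst nn_integral_mixture_loss_eq_emp_risk[OF loss])

end

theorem theorem7:
  fixes MZ :: "'z measure" and MW :: "'w measure"
    and loss :: "'w \<Rightarrow> 'z \<Rightarrow> real"
    and \<mu> \<mu>' :: "'z measure" and n :: nat
    and A :: "(nat \<Rightarrow> 'z) \<Rightarrow> 'w measure"
    and \<M> :: "'w measure set"
  assumes loss_meas: "(\<lambda>(w, z). loss w z) \<in> borel_measurable (MW \<Otimes>\<^sub>M MZ)"
    and loss_nonneg: "\<And>w z. 0 \<le> loss w z"
    and mu: "prob_space \<mu>" "sets \<mu> = sets MZ"
    and mu': "prob_space \<mu>'" "sets \<mu>' = sets MZ"
    and n: "0 < n"
    and kernel: "A \<in> PiM {..<n} (\<lambda>_. MZ) \<rightarrow>\<^sub>M prob_algebra MW"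
    and family: "\<And>\<nu>. \<nu> \<in> \<M> \<Longrightarrow> prob_space \<nu> \<and> sets \<nu> = sets MW"
    and marginal: "distr (joint_law MZ MW n \<mu>' A) MW snd \<in> \<M>"
    and finite_pop: "(\<integral>\<^sup>+ p. pop_risk \<mu> loss (snd p) \<partial>joint_law MZ MW n \<mu>' A) < \<infinity>"
    and finite_emp: "(\<integral>\<^sup>+ p. ennreal (emp_risk n loss (fst p) (snd p)) \<partial>joint_law MZ MW n \<mu>' A) < \<infinity>"
  shows "gen MZ MW n loss \<mu> \<mu>' A
           \<ge> D4 MW MZ loss \<mu> \<mu>' (mutual_inf (PiM {..<n} (\<lambda>_. MZ)) MW (joint_law MZ MW n \<mu>' A) / ereal (real n)) \<M>"
proof -
  interpret sample_kernel MZ MW \<mu>' n A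
    by (rule sample_kernel.intro) (fact mu' n kernel)+
  have admissible: "mixture \<in> {P \<in> couplings MW MZ \<nu> \<mu>'. mutual_inf MW MZ P \<le> mutual_inf Zn MW J / ereal (real n)}"
    using mixture_coupling mutual_inf_mixture_le by simp
  show ?thesis
    unfolding D4_def gen_eq_mixture_risk_gap[OF loss_meas loss_nonneg mu]
    by (rule INF_lower2[OF marginal], rule INF_lower2[OF admissible]) simp
qed

end
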